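(* Let $\lambda\leq \frac{9}{10}$, $\epsilon>0$, $p>\frac{2}{\lambda\epsilon}$ a prime, and let $Y=Y_1+\dots+Y_{\ell}$ where the $Y_i$ are i.i.d. random variables taking values in $\mathbb{Z}_p$ whose distributions are upper-bounded by $\lambda$ (i.e. $\max_{x\in\mathbb{Z}_p}\mathbb{P}[Y_i=x]\leq\lambda$). Then, if $\ell$ is sufficiently large with respect to $\epsilon$, we have that $$\max_{x\in \mathbb{Z}_p} \mathbb{P}[Y=x]\leq \epsilon \lambda.$$ In particular, if $k_0$ is a positive integer such that $(C_3)^{k_0}<\epsilon\leq (C_3)^{k_0-1}$ and $\ell_0=3^{k_0}$, then $\max_{x\in \mathbb{Z}_p} \mathbb{P}[Y=x]\leq \epsilon \lambda$ holds for any $\ell\geq \ell_0$.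
   Context: Here $C_3<1$ is the absolute constant with the following property: for every $\lambda\leq \frac{9}{10}$ and prime $p>\frac{2}{\lambda}$, if $Y_1,Y_2,Y_3$ are identical and independent $\mathbb{Z}_p$-valued random variables with $\max_{x\in\mathbb{Z}_p}\mathbb{P}[Y_1=x]\leq\lambda$, then $\max_{x\in\mathbb{Z}_p}\mathbb{P}[Y_1+Y_2+Y_3=x]\leq C_3\lambda$ (one may take $C_3<1-1.3\cdot 10^{-12}$). *)

theory Defs
  imports "HOL-Probability.Probability"
begin

text \<open>Elements of Z_p are represented by the integers 0..p-1. A Z_p-valued
random variable is represented by its distribution, an int pmf supported in
{0..<p}.  The distribution of Y_1 + ... + Y_l (sum in Z_p) for i.i.d. Y_i with
distribution Y is the l-fold convolution modulo p.\<close>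

definition zp_valued :: "nat \<Rightarrow> int pmf \<Rightarrow> bool" where
  "zp_valued p Y \<longleftrightarrow> set_pmf Y \<subseteq> {0..<int p}"

primrec iid_sum_mod :: "nat \<Rightarrow> int pmf \<Rightarrow> nat \<Rightarrow> int pmf" where
  "iid_sum_mod p Y 0 = return_pmf 0"
| "iid_sum_mod p Y (Suc n) =
     bind_pmf (iid_sum_mod p Y n) (\<lambda>a. map_pmf (\<lambda>b. (a + b) mod int p) Y)"

definition C3_property :: "real \<Rightarrow> bool" where
  "C3_property C \<longleftrightarrow> C < 1 \<and>
     (\<forall>(lam::real) (p::nat) (Y::int pmf).
        lam \<le> 9/10 \<and> prime p \<and> real p > 2 / lam \<and> zp_valued p Y \<and>
        (\<forall>x. pmf Y x \<le> lam)
        \<longrightarrow> (\<forall>x. pmf (iid_sum_mod p Y 3) x \<le> C * lam))"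

end

theory Submission
  imports Defs
begin

text \<open>Adding further independent summands never increases the largest atom: the law of
  A + Z is an average of translates of the law of Z, and translation mod p is injective on
  Z_p. Tripling the number of summands multiplies the bound on the largest atom by C_3,
  which is allowed as long as p exceeds 2 / (current bound). Starting from \<lambda> and tripling
  k_0 times, where k_0 is least with C_3^k_0 < \<epsilon>, every intermediate bound is at
  least \<epsilon> \<lambda>, so the hypothesis p > 2 / (\<epsilon> \<lambda>) keeps each step legal and the
  final bound C_3^k_0 \<lambda> is below \<epsilon> \<lambda>.\<close>

lemma set_pmf_iid_sum_mod: "p > 0 \<Longrightarrow> set_pmf (iid_sum_mod p Y n) \<subseteq> {0..<int p}"
  by (induction n) auto

lemma iid_sum_mod_add:
  assumes "p > 0"
  shows "iid_sum_mod p Y (m + n) =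
    bind_pmf (iid_sum_mod p Y m) (\<lambda>a. map_pmf (\<lambda>b. (a + b) mod int p) (iid_sum_mod p Y n))"
proof (induction n)
  case 0
  have "bind_pmf (iid_sum_mod p Y m) (\<lambda>a. map_pmf (\<lambda>b. (a + b) mod int p) (iid_sum_mod p Y 0))
      = bind_pmf (iid_sum_mod p Y m) return_pmf"
  proof (rule bind_pmf_cong)
    fix a assume "a \<in> set_pmf (iid_sum_mod p Y m)"
    then have "a \<in> {0..<int p}" using set_pmf_iid_sum_mod[OF assms] by blast
    then show "map_pmf (\<lambda>b. (a + b) mod int p) (iid_sum_mod p Y 0) = return_pmf a"
      by simp
  qed simp
  then show ?case by (simp add: bind_return_pmf')
next
  case (Suc n)
  have "iid_sum_mod p Y (m + Suc n) = bind_pmf (iid_sum_mod p Y m) (\<lambda>a.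
      bind_pmf (iid_sum_mod p Y n) (\<lambda>c. map_pmf (\<lambda>b. ((a + c) mod int p + b) mod int p) Y))"
    by (simp add: Suc bind_assoc_pmf bind_map_pmf)
  also have "\<dots> = bind_pmf (iid_sum_mod p Y m) (\<lambda>a.
      bind_pmf (iid_sum_mod p Y n) (\<lambda>c. map_pmf (\<lambda>b. (a + (c + b) mod int p) mod int p) Y))"
    by (simp add: mod_add_left_eq mod_add_right_eq add.assoc)
  also have "\<dots> = bind_pmf (iid_sum_mod p Y m)
      (\<lambda>a. map_pmf (\<lambda>b. (a + b) mod int p) (iid_sum_mod p Y (Suc n)))"
    by (simp add: map_bind_pmf pmf.map_comp o_def)
  finally show ?case .
qed

lemma iid_sum_mod_iid_sum_mod:
  "p > 0 \<Longrightarrow> iid_sum_mod p (iid_sum_mod p Y n) m = iid_sum_mod p Y (n * m)"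
  by (induction m) (simp_all add: iid_sum_mod_add[symmetric] add.commute)

lemma inj_on_add_mod: "inj_on (\<lambda>b. (a + b) mod m) {0..<m :: int}"
proof (rule inj_onI)
  fix b b' assume "b \<in> {0..<m}" "b' \<in> {0..<m}" "(a + b) mod m = (a + b') mod m"
  then show "b = b'"
    by (metis add_diff_cancel_left' atLeastLessThan_iff mod_diff_left_eq mod_pos_pos_trivial)
qed

lemma pmf_bind_add_mod_le:
  assumes "set_pmf Z \<subseteq> {0..<int p}" and "\<And>z. pmf Z z \<le> c"
  shows "pmf (bind_pmf A (\<lambda>a. map_pmf (\<lambda>b. (a + b) mod int p) Z)) x \<le> c"
proof -
  have translate_le: "pmf (map_pmf (\<lambda>b. (a + b) mod int p) Z) x \<le> c" for a
  proof (cases "x \<in> (\<lambda>b. (a + b) mod int p) ` set_pmf Z")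
    case True
    then obtain b where b: "b \<in> set_pmf Z" "x = (a + b) mod int p" by blast
    have "inj_on (\<lambda>b. (a + b) mod int p) (set_pmf Z)"
      using inj_on_add_mod inj_on_subset assms(1) by blast
    then have "pmf (map_pmf (\<lambda>b. (a + b) mod int p) Z) x = pmf Z b"
      unfolding b(2) using b(1) by (rule pmf_map_inj)
    then show ?thesis using assms(2) by simp
  next
    case False
    then have "pmf (map_pmf (\<lambda>b. (a + b) mod int p) Z) x = 0" by (rule pmf_map_outside)
    then show ?thesis using assms(2) pmf_nonneg order_trans by metis
  qed
  show ?thesis
    unfolding pmf_bind
    by (rule measure_pmf.integral_le_const)
       (auto intro!: translate_le measure_pmf.integrable_const_bound[where B=1] simp: pmf_le_1)
qed

lemma pmf_iid_sum_mod_le_mono: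
  assumes "p > 0" "m \<le> n" "\<And>z. pmf (iid_sum_mod p Y m) z \<le> c"
  shows "pmf (iid_sum_mod p Y n) x \<le> c"
proof -
  have "iid_sum_mod p Y n = bind_pmf (iid_sum_mod p Y (n - m))
      (\<lambda>a. map_pmf (\<lambda>b. (a + b) mod int p) (iid_sum_mod p Y m))"
    using iid_sum_mod_add[OF assms(1), of Y "n - m" m] assms(2) by simp
  then show ?thesis
    using pmf_bind_add_mod_le[OF set_pmf_iid_sum_mod[OF assms(1)] assms(3)] by simp
qed

lemma pmf_le_imp_pos: "(\<And>x. pmf (Y :: 'a pmf) x \<le> c) \<Longrightarrow> c > 0"
  using set_pmf_not_empty[of Y] pmf_positive by (metis ex_in_conv order_less_le_trans)

lemma C3_property_bounds:
  assumes "C3_property C"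
  shows "0 < C" "C < 1"
proof -
  define Y :: "int pmf" where "Y = pmf_of_set {0, 1, 2}"
  have "zp_valued 3 Y"
    unfolding zp_valued_def Y_def by (simp add: set_pmf_of_set)
  moreover have "\<forall>x. pmf Y x \<le> 9/10"
    unfolding Y_def by (auto simp: pmf_of_set indicator_def)
  moreover have "prime (3::nat)" "real (3::nat) > 2 / (9/10)" by simp_all
  ultimately have "\<And>x. pmf (iid_sum_mod 3 Y 3) x \<le> C * (9/10)"
    using assms unfolding C3_property_def by (metis order_refl)
  then have "C * (9/10) > 0" by (rule pmf_le_imp_pos)
  then show "0 < C" by simp
  show "C < 1" using assms unfolding C3_property_def by simp
qed

lemma least_power_less:
  fixes C eps :: real
  assumes "0 < eps" "C < 1"
  obtains k where "C ^ k < eps" "\<And>j. j < k \<Longrightarrow> eps \<le> C ^ j"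
proof
  show "C ^ (LEAST k. C ^ k < eps) < eps"
    using real_arch_pow_inv[OF assms] by (rule LeastI_ex)
  show "eps \<le> C ^ j" if "j < (LEAST k. C ^ k < eps)" for j
    using not_less_Least[OF that] by simp
qed

lemma pmf_iid_sum_mod_pow3_le:
  assumes C3: "C3_property C" and "lam \<le> 9/10" "prime p" "zp_valued p Y" "\<And>x. pmf Y x \<le> lam"
    and p_large: "\<And>j. j < k \<Longrightarrow> real p > 2 / (C ^ j * lam)"
  shows "pmf (iid_sum_mod p Y (3 ^ k)) x \<le> C ^ k * lam"
  using p_large
proof (induction k arbitrary: x)
  case 0
  then show ?case using assms(5) pmf_bind_add_mod_le[of Y p lam "return_pmf 0"] assms(4)
    by (simp add: zp_valued_def)
next
  case (Suc k)
  have "p > 0" using \<open>prime p\<close> prime_gt_0_nat by blast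
  have "C ^ k \<le> 1" using C3_property_bounds[OF C3] by (simp add: power_le_one)
  then have "C ^ k * lam \<le> 9/10"
    using \<open>lam \<le> 9/10\<close> pmf_le_imp_pos[OF assms(5)] C3_property_bounds[OF C3]
    by (smt (verit) mult_left_le_one_le zero_le_power)
  moreover have "zp_valued p (iid_sum_mod p Y (3 ^ k))"
    unfolding zp_valued_def using set_pmf_iid_sum_mod[OF \<open>p > 0\<close>] .
  ultimately have "pmf (iid_sum_mod p (iid_sum_mod p Y (3 ^ k)) 3) x \<le> C * (C ^ k * lam)"
    using C3 \<open>prime p\<close> Suc unfolding C3_property_def by simp
  then show ?case
    using iid_sum_mod_iid_sum_mod[OF \<open>p > 0\<close>] by (simp add: ac_simps)
qed

lemma pmf_iid_sum_mod_le_eps: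
  assumes C3: "C3_property C" and "eps > 0"
    and k: "C ^ k < eps" "\<And>j. j < k \<Longrightarrow> eps \<le> C ^ j" and "l \<ge> 3 ^ k"
    and "lam \<le> 9/10" "prime p" "real p > 2 / (lam * eps)" "zp_valued p Y" "\<And>x. pmf Y x \<le> lam"
  shows "pmf (iid_sum_mod p Y l) x \<le> eps * lam"
proof -
  have "lam > 0" using assms(10) by (rule pmf_le_imp_pos)
  have p_large: "real p > 2 / (C ^ j * lam)" if "j < k" for j
  proof -
    have "2 / (C ^ j * lam) \<le> 2 / (eps * lam)"
      using k(2)[OF that] \<open>eps > 0\<close> \<open>lam > 0\<close> by (intro divide_left_mono) simp_all
    then show ?thesis using assms(8) by (simp add: mult.commute)
  qed
  have "pmf (iid_sum_mod p Y (3 ^ k)) z \<le> C ^ k * lam" for z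
    using pmf_iid_sum_mod_pow3_le[OF C3 assms(6,7,9,10) p_large] .
  moreover have "p > 0" using \<open>prime p\<close> prime_gt_0_nat by blast
  ultimately have "pmf (iid_sum_mod p Y l) x \<le> C ^ k * lam"
    using pmf_iid_sum_mod_le_mono \<open>l \<ge> 3 ^ k\<close> by blast
  also have "\<dots> \<le> eps * lam" using k(1) \<open>lam > 0\<close> by simp
  finally show ?thesis .
qed

theorem theorem3p5:
  fixes C3 :: real
  assumes "C3_property C3"
  shows "(\<forall>eps::real. eps > 0 \<longrightarrow>
            (\<exists>L::nat. \<forall>l \<ge> L. \<forall>(lam::real) (p::nat) (Y::int pmf).
               lam \<le> 9/10 \<and> prime p \<and> real p > 2 / (lam * eps) \<and> zp_valued p Y \<and>
               (\<forall>x. pmf Y x \<le> lam)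
               \<longrightarrow> (\<forall>x. pmf (iid_sum_mod p Y l) x \<le> eps * lam)))
       \<and> (\<forall>(eps::real) (k0::nat) (l::nat) (lam::real) (p::nat) (Y::int pmf).
            eps > 0 \<and> k0 \<ge> 1 \<and> C3 ^ k0 < eps \<and> eps \<le> C3 ^ (k0 - 1) \<and> l \<ge> 3 ^ k0 \<and>
            lam \<le> 9/10 \<and> prime p \<and> real p > 2 / (lam * eps) \<and> zp_valued p Y \<and>
            (\<forall>x. pmf Y x \<le> lam)
            \<longrightarrow> (\<forall>x. pmf (iid_sum_mod p Y l) x \<le> eps * lam))"
proof (intro conjI allI impI)
  fix eps :: real assume "eps > 0"
  then obtain k where "C3 ^ k < eps" "\<And>j. j < k \<Longrightarrow> eps \<le> C3 ^ j"
    using least_power_less C3_property_bounds[OF assms] by blast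
  then show "\<exists>L::nat. \<forall>l \<ge> L. \<forall>lam p Y. lam \<le> 9/10 \<and> prime p \<and>
      real p > 2 / (lam * eps) \<and> zp_valued p Y \<and> (\<forall>x. pmf Y x \<le> lam)
      \<longrightarrow> (\<forall>x. pmf (iid_sum_mod p Y l) x \<le> eps * lam)"
    using pmf_iid_sum_mod_le_eps[OF assms \<open>eps > 0\<close>] by (intro exI[of _ "3 ^ k"]) simp
next
  fix eps lam :: real and k0 l p :: nat and Y :: "int pmf" and x :: int
  assume hyps: "eps > 0 \<and> k0 \<ge> 1 \<and> C3 ^ k0 < eps \<and> eps \<le> C3 ^ (k0 - 1) \<and> l \<ge> 3 ^ k0 \<and>
    lam \<le> 9/10 \<and> prime p \<and> real p > 2 / (lam * eps) \<and> zp_valued p Y \<and> (\<forall>x. pmf Y x \<le> lam)"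
  have "eps \<le> C3 ^ j" if "j < k0" for j
  proof -
    have "C3 ^ (k0 - 1) \<le> C3 ^ j"
      using that C3_property_bounds[OF assms] by (intro power_decreasing) simp_all
    then show ?thesis using hyps by linarith
  qed
  with hyps show "pmf (iid_sum_mod p Y l) x \<le> eps * lam"
    by (intro pmf_iid_sum_mod_le_eps[OF assms, of eps k0]) simp_all
qed

end
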